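(* Let $C$ be an $\mathbb F_q$-linear $(n,q^k,d)_{q^h}$ code over $\mathbb F_{q^h}$, and let $\mathcal A=\{\pi_1,\dots,\pi_n\}$ be an associated projective $h$-system in $\mathrm{PG}(k-1,q)$, where $\pi_j$ corresponds to coordinate position $j$. Then, for each $i\in[1,n]$, the projective $h$-systems associated to the projection of $C$ from position $i$ are (up to $\mathrm{PGL}$-equivalence) equal to the projection of $\mathcal A$ from $\pi_i$.
   Context: An $\mathbb F_q$-linear code over $\mathbb F_{q^h}$ is an $\mathbb F_q$-subspace of $\mathbb F_{q^h}^n$; here it has $q^k$ codewords, i.e. $\mathbb F_q$-dimension $k$. Associated projective $h$-system: let $G\in\mathbb F_{q^h}^{k\times n}$ have rows forming an $\mathbb F_q$-basis of $C$, fix an $\mathbb F_q$-basis $\alpha=(\alpha_1,\dots,\alpha_h)^t$ of $\mathbb F_{q^h}$, write the $j$-th column of $G$ as $G_j\alpha$ with $G_j\in\mathbb F_q^{k\times h}$, and let $\pi_j$ be the projective subspace of $\mathrm{PG}(k-1,q)$ given by the column space of $G_j$; the multiset $\{\pi_1,\dots,\pi_n\}$ is an associated projective $h$-system (these form a $\mathrm{PGL}(k,q)$-orbit). The projection of $C$ from position $i$ is $\{(x_1,\dots,x_{i-1},x_{i+1},\dots,x_n):(x_1,\dots,x_{i-1},0,x_{i+1},\dots,x_n)\in C\}$. For a subspace $U$ of $V=\mathbb F_q^k$, the projection from $U$ maps a subspace $W$ of $V$ to $(W+U)/U$ in $V/U$; this induces a map from subspaces of $\mathrm{PG}(V)$ to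 subspaces of $\mathrm{PG}(V/U)$. The projection of $\mathcal A$ from $\pi_i$ is the multiset of images of the elements of $\mathcal A\setminus\{\pi_i\}$ (as a multiset, removing the single element $\pi_i$) under projection from the subspace corresponding to $\pi_i$. *)

theory Defs
  imports Main "HOL-Library.Multiset"
begin

text \<open>Everything lives in one field type 'b playing the role of F_{q^h};
  F_q is represented as a subfield F of 'b.  Vectors of length m are
  functions nat => 'b vanishing at all indices >= m (0-based indices).\<close>

definition is_subfield :: "'b::field set \<Rightarrow> bool" where
  "is_subfield F \<longleftrightarrow> 0 \<in> F \<and> 1 \<in> F \<and>
     (\<forall>x\<in>F. \<forall>y\<in>F. x + y \<in> F \<and> x * y \<in> F) \<and>
     (\<forall>x\<in>F. - x \<in> F \<and> inverse x \<in> F)"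

definition is_field_basis :: "'b::field set \<Rightarrow> nat \<Rightarrow> (nat \<Rightarrow> 'b) \<Rightarrow> bool" where
  "is_field_basis F h \<alpha> \<longleftrightarrow>
     (\<forall>c. (\<forall>l<h. c l \<in> F) \<longrightarrow> (\<Sum>l<h. c l * \<alpha> l) = 0 \<longrightarrow> (\<forall>l<h. c l = 0)) \<and>
     (\<forall>x. \<exists>c. (\<forall>l<h. c l \<in> F) \<and> x = (\<Sum>l<h. c l * \<alpha> l))"

definition vecs :: "nat \<Rightarrow> (nat \<Rightarrow> 'b::field) set" where
  "vecs m = {x. \<forall>j\<ge>m. x j = 0}"

definition Fvecs :: "'b::field set \<Rightarrow> nat \<Rightarrow> (nat \<Rightarrow> 'b) set" where
  "Fvecs F m = {v. (\<forall>r<m. v r \<in> F) \<and> (\<forall>r\<ge>m. v r = 0)}"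

definition fcomb :: "'b::field set \<Rightarrow> nat \<Rightarrow> (nat \<Rightarrow> nat \<Rightarrow> 'b) \<Rightarrow> (nat \<Rightarrow> 'b) set" where
  "fcomb F m v = {(\<lambda>j. \<Sum>r<m. c r * v r j) | c. \<forall>r<m. c r \<in> F}"

definition F_indep :: "'b::field set \<Rightarrow> nat \<Rightarrow> (nat \<Rightarrow> nat \<Rightarrow> 'b) \<Rightarrow> bool" where
  "F_indep F m v \<longleftrightarrow> (\<forall>c. (\<forall>r<m. c r \<in> F) \<longrightarrow> (\<lambda>j. \<Sum>r<m. c r * v r j) = (\<lambda>j. 0)
      \<longrightarrow> (\<forall>r<m. c r = 0))"

definition F_basis :: "'b::field set \<Rightarrow> nat \<Rightarrow> (nat \<Rightarrow> nat \<Rightarrow> 'b) \<Rightarrow> (nat \<Rightarrow> 'b) set \<Rightarrow> bool" where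
  "F_basis F m v S \<longleftrightarrow> F_indep F m v \<and> fcomb F m v = S"

definition F_subspace :: "'b::field set \<Rightarrow> (nat \<Rightarrow> 'b) set \<Rightarrow> bool" where
  "F_subspace F S \<longleftrightarrow> (\<lambda>j. 0) \<in> S \<and> (\<forall>x\<in>S. \<forall>y\<in>S. (\<lambda>j. x j + y j) \<in> S) \<and>
     (\<forall>c\<in>F. \<forall>x\<in>S. (\<lambda>j. c * x j) \<in> S)"

definition Flinear_code :: "'b::field set \<Rightarrow> nat \<Rightarrow> nat \<Rightarrow> (nat \<Rightarrow> 'b) set \<Rightarrow> bool" where
  "Flinear_code F n k C \<longleftrightarrow> C \<subseteq> vecs n \<and> F_subspace F C \<and> card C = card F ^ k"

text \<open>As is (the list, indexed by coordinate positions 0..n-1, of) an associated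
  projective h-system of C: G (k x n, rows an F-basis of C) has j-th column
  G_j alpha with G_j = Gc j a k x h matrix over F, and As!j is the column space
  of G_j, an F-subspace of F^k (projective subspaces of PG(k-1,q) are identified
  with the corresponding vector subspaces of F^k).\<close>
definition assoc_system :: "'b::field set \<Rightarrow> nat \<Rightarrow> (nat \<Rightarrow> 'b) \<Rightarrow> nat \<Rightarrow> nat \<Rightarrow>
    (nat \<Rightarrow> 'b) set \<Rightarrow> (nat \<Rightarrow> 'b) set list \<Rightarrow> bool" where
  "assoc_system F h \<alpha> k n C As \<longleftrightarrow>
     (\<exists>G Gc. (\<forall>j<n. \<forall>r<k. \<forall>l<h. Gc j r l \<in> F) \<and>
        (\<forall>r<k. \<forall>j<n. G r j = (\<Sum>l<h. Gc j r l * \<alpha> l)) \<and>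
        F_basis F k (\<lambda>r j. if j < n then G r j else 0) C \<and>
        As = map (\<lambda>j. fcomb F h (\<lambda>l r. if r < k then Gc j r l else 0)) [0..<n])"

definition proj_code :: "nat \<Rightarrow> (nat \<Rightarrow> 'b::zero) set \<Rightarrow> (nat \<Rightarrow> 'b) set" where
  "proj_code i C = {(\<lambda>j. if j < i then x j else x (Suc j)) | x. x \<in> C \<and> x i = 0}"

definition mat_app :: "nat \<Rightarrow> nat \<Rightarrow> (nat \<Rightarrow> nat \<Rightarrow> 'b::field) \<Rightarrow> (nat \<Rightarrow> 'b) \<Rightarrow> (nat \<Rightarrow> 'b)" where
  "mat_app k' k P v = (\<lambda>r. if r < k' then (\<Sum>s<k. P r s * v s) else 0)"

text \<open>P realises the quotient map F^k -> F^k / U, with F^k/U identified with F^k'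
  (any such identification is a PGL-equivalence): P is F-linear, surjective
  onto F^k' and has kernel exactly U.\<close>
definition quotient_map :: "'b::field set \<Rightarrow> nat \<Rightarrow> nat \<Rightarrow> (nat \<Rightarrow> 'b) set \<Rightarrow>
    (nat \<Rightarrow> nat \<Rightarrow> 'b) \<Rightarrow> bool" where
  "quotient_map F k k' U P \<longleftrightarrow>
     (\<forall>r<k'. \<forall>s<k. P r s \<in> F) \<and>
     mat_app k' k P ` Fvecs F k = Fvecs F k' \<and>
     {v \<in> Fvecs F k. mat_app k' k P v = (\<lambda>r. 0)} = U"

end

theory Submission
  imports Defs
begin

(* The codewords of C are the vectors x_c = sum_r c_r g_r (c in F_q^k, g_r the rows of G),
   and the j-th coordinate of x_c is sum_l (c . u_jl) alpha_l, where the u_jl span pi_j.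
   Hence x_c vanishes at position i iff c lies in the annihilator pi_i^perp, and deleting
   position i maps pi_i^perp isomorphically onto the projected code.  A generator matrix of
   the projected code is therefore the same as a k' x k matrix P over F_q whose rows form a
   basis of pi_i^perp, and its column blocks are P G_j, spanning P pi_j.  By the double
   annihilator theorem, the rows of P are a basis of pi_i^perp iff P is surjective with
   kernel pi_i, i.e. iff P realises the quotient map F_q^k -> F_q^k / pi_i. *)

definition lincomb :: "nat \<Rightarrow> (nat \<Rightarrow> nat \<Rightarrow> 'a::semiring_0) \<Rightarrow> (nat \<Rightarrow> 'a) \<Rightarrow> nat \<Rightarrow> 'a" where
  "lincomb m v c = (\<lambda>j. \<Sum>r<m. c r * v r j)"

definition dotp :: "nat \<Rightarrow> (nat \<Rightarrow> 'a::semiring_0) \<Rightarrow> (nat \<Rightarrow> 'a) \<Rightarrow> 'a" where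
  "dotp k c v = (\<Sum>s<k. c s * v s)"

definition unit_vec :: "nat \<Rightarrow> nat \<Rightarrow> 'a::zero_neq_one" where
  "unit_vec r = (\<lambda>s. if s = r then 1 else 0)"

definition annihilator :: "'b::field set \<Rightarrow> nat \<Rightarrow> nat \<Rightarrow> (nat \<Rightarrow> nat \<Rightarrow> 'b) \<Rightarrow> (nat \<Rightarrow> 'b) set" where
  "annihilator F k m u = {c \<in> Fvecs F k. \<forall>l<m. dotp k c (u l) = 0}"

definition mat_rows :: "nat \<Rightarrow> (nat \<Rightarrow> nat \<Rightarrow> 'a::zero) \<Rightarrow> nat \<Rightarrow> nat \<Rightarrow> 'a" where
  "mat_rows k P r = (\<lambda>s. if s < k then P r s else 0)"

definition mat_cols :: "nat \<Rightarrow> (nat \<Rightarrow> nat \<Rightarrow> 'a::zero) \<Rightarrow> nat \<Rightarrow> nat \<Rightarrow> 'a" where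
  "mat_cols k' P s = (\<lambda>r. if r < k' then P r s else 0)"

lemma fcomb_lincomb: "fcomb F m v = {lincomb m v c | c. \<forall>r<m. c r \<in> F}"
  by (simp add: fcomb_def lincomb_def)

lemma F_indep_lincomb:
  "F_indep F m v \<longleftrightarrow> (\<forall>c. (\<forall>r<m. c r \<in> F) \<longrightarrow> lincomb m v c = (\<lambda>j. 0) \<longrightarrow> (\<forall>r<m. c r = 0))"
  by (simp add: F_indep_def lincomb_def)

lemma lincomb_cong: "(\<And>r. r < m \<Longrightarrow> c r = c' r) \<Longrightarrow> lincomb m v c = lincomb m v c'"
  by (auto simp: lincomb_def intro!: sum.cong)

lemma lincomb_cong_family: "(\<And>r. r < m \<Longrightarrow> v r = v' r) \<Longrightarrow> lincomb m v = lincomb m v'"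
  by (auto simp: lincomb_def intro!: sum.cong ext)

lemma fcomb_cong: "(\<And>r. r < m \<Longrightarrow> v r = v' r) \<Longrightarrow> fcomb F m v = fcomb F m v'"
  unfolding fcomb_lincomb by (simp cong: lincomb_cong_family)

lemma F_basis_cong: "(\<And>r. r < m \<Longrightarrow> v r = v' r) \<Longrightarrow> F_basis F m v S \<longleftrightarrow> F_basis F m v' S"
  unfolding F_basis_def F_indep_lincomb using fcomb_cong lincomb_cong_family by metis

lemma lincomb_zero [simp]: "lincomb m v (\<lambda>_. 0) = (\<lambda>j. 0)"
  by (simp add: lincomb_def)

lemma lincomb_diff:
  "lincomb m v (\<lambda>r. x r - y r) = (\<lambda>j. lincomb m v x j - lincomb m v (y :: nat \<Rightarrow> 'a::comm_ring) j)"
  by (simp add: lincomb_def left_diff_distrib sum_subtractf)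

lemma lincomb_lincomb:
  fixes v :: "nat \<Rightarrow> nat \<Rightarrow> 'a::comm_semiring_0"
  shows "lincomb k v (lincomb m p d) = lincomb m (\<lambda>r. lincomb k v (p r)) d"
  by (simp add: lincomb_def sum_distrib_left sum_distrib_right mult.assoc sum.swap[of _ "{..<k}"])

lemma fcomb_eq_image_Fvecs: "fcomb F m v = lincomb m v ` Fvecs F m"
proof (intro equalityI subsetI)
  fix x assume "x \<in> fcomb F m v"
  then obtain c where c: "\<forall>r<m. c r \<in> F" "x = lincomb m v c"
    by (auto simp: fcomb_lincomb)
  let ?c = "\<lambda>r. if r < m then c r else 0"
  have "x = lincomb m v ?c" "?c \<in> Fvecs F m"
    using c by (auto simp: Fvecs_def intro: lincomb_cong)
  then show "x \<in> lincomb m v ` Fvecs F m" by blast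
qed (auto simp: fcomb_lincomb Fvecs_def)

lemma fcomb_zero: "fcomb F 0 u = {\<lambda>j. 0}"
  by (simp add: fcomb_lincomb lincomb_def)

lemma dotp_commute: "dotp k c v = dotp k v (c :: nat \<Rightarrow> 'a::comm_semiring_0)"
  by (simp add: dotp_def mult.commute)

lemma dotp_lincomb_right:
  fixes c :: "nat \<Rightarrow> 'a::comm_semiring_0"
  shows "dotp k c (lincomb m u a) = (\<Sum>l<m. a l * dotp k c (u l))"
  by (simp add: dotp_def lincomb_def sum_distrib_left mult.left_commute sum.swap[of _ "{..<k}"])

lemma dotp_diff_left:
  "dotp k (\<lambda>s. a s - t * b s) v = dotp k a v - t * dotp k b (v :: nat \<Rightarrow> 'a::comm_ring)"
  by (simp add: dotp_def algebra_simps sum_subtractf sum_distrib_left)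

lemma dotp_diff_right:
  "dotp k c (\<lambda>s. a s - t * b s) = dotp k c a - t * dotp k c (b :: nat \<Rightarrow> 'a::comm_ring)"
  by (simp add: dotp_def algebra_simps sum_subtractf sum_distrib_left)

lemma sum_unit_vec:
  fixes v :: "nat \<Rightarrow> 'a::semiring_1"
  assumes "r < k"
  shows "(\<Sum>s<k. unit_vec r s * v s) = v r"
proof -
  have "(\<Sum>s<k. unit_vec r s * v s) = (\<Sum>s<k. if s = r then v s else 0)"
    by (rule sum.cong) (auto simp: unit_vec_def)
  with assms show ?thesis by simp
qed

lemma dotp_unit_vec: "r < k \<Longrightarrow> dotp k (unit_vec r) v = (v r :: 'a::semiring_1)"
  by (simp add: dotp_def sum_unit_vec)

lemma dotp_unit_vec_right: "r < k \<Longrightarrow> dotp k d (unit_vec r) = (d r :: 'a::comm_semiring_1)"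
  by (subst dotp_commute) (rule dotp_unit_vec)

lemma mat_app_nth: "r < k' \<Longrightarrow> mat_app k' k P v r = dotp k (mat_rows k P r) v"
  by (simp add: mat_app_def dotp_def mat_rows_def)

lemma mat_app_eq_dotp_rows:
  "mat_app k' k P v = (\<lambda>r. if r < k' then dotp k (mat_rows k P r) v else 0)"
  by (auto simp: mat_app_def dotp_def mat_rows_def)

lemma mat_app_eq_0_iff:
  "mat_app k' k P v = (\<lambda>r. 0) \<longleftrightarrow> (\<forall>r<k'. dotp k (mat_rows k P r) v = 0)"
proof -
  have "mat_app k' k P v = (\<lambda>r. 0) \<longleftrightarrow> (\<forall>r<k'. mat_app k' k P v r = 0)"
    by (auto simp: fun_eq_iff mat_app_def)
  then show ?thesis by (simp add: mat_app_nth)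
qed

lemma mat_app_eq_lincomb_cols: "mat_app k' k P v = lincomb k (mat_cols k' P) v"
  by (auto simp: mat_app_def lincomb_def mat_cols_def mult.commute)

lemma dotp_mat_app: "dotp k' d (mat_app k' k P v) = dotp k (lincomb k' (mat_rows k P) d) v"
  by (simp add: dotp_def mat_app_def lincomb_def mat_rows_def sum_distrib_left sum_distrib_right
      mult.assoc sum.swap[of _ "{..<k}"])

lemma dotp_mat_cols: "s < k \<Longrightarrow> dotp k' d (mat_cols k' P s) = lincomb k' (mat_rows k P) d s"
  by (simp add: dotp_def lincomb_def mat_cols_def mat_rows_def)

lemma lincomb_mat_rows_beyond: "k \<le> s \<Longrightarrow> lincomb k' (mat_rows k P) d s = 0"
  by (simp add: lincomb_def mat_rows_def)

lemma mat_app_image_fcomb: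
  "mat_app k' k P ` fcomb F m u = fcomb F m (\<lambda>l. mat_app k' k P (u l))"
proof -
  have "mat_app k' k P (lincomb m u c) = lincomb m (\<lambda>l. mat_app k' k P (u l)) c" for c
    by (simp add: mat_app_eq_lincomb_cols lincomb_lincomb)
  then show ?thesis by (simp add: fcomb_lincomb setcompr_eq_image image_image)
qed

lemma mat_app_image_Fvecs: "mat_app k' k P ` Fvecs F k = fcomb F k (mat_cols k' P)"
  by (simp add: fcomb_eq_image_Fvecs mat_app_eq_lincomb_cols image_def)

section \<open>Deleting a coordinate\<close>

definition skip :: "nat \<Rightarrow> nat \<Rightarrow> nat" where
  "skip i j = (if j < i then j else Suc j)"

lemma proj_code_skip: "proj_code i C = {(\<lambda>j. x (skip i j)) | x. x \<in> C \<and> x i = 0}"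
  by (simp add: proj_code_def skip_def if_distrib)

lemma skip_less: "i < n \<Longrightarrow> j < n - 1 \<Longrightarrow> skip i j < n"
  unfolding skip_def by auto

lemma skip_ge: "i < n \<Longrightarrow> n - 1 \<le> j \<Longrightarrow> n \<le> skip i j"
  unfolding skip_def by auto

lemma eq_if_skip_eq:
  assumes "x i = y i" "\<And>j. x (skip i j) = y (skip i j)"
  shows "x = y"
proof
  fix j
  consider "j < i" | "j = i" | "i < j" by linarith
  then show "x j = y j"
  proof cases
    case 1
    then show ?thesis using assms(2)[of j] by (simp add: skip_def)
  next
    case 2
    then show ?thesis using assms(1) by simp
  next
    case 3
    then have "skip i (j - 1) = j" by (simp add: skip_def)
    then show ?thesis using assms(2)[of "j - 1"] by simp
  qed
qed

lemma mset_remove_nth: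
  assumes "i < length xs"
  shows "mset xs - {#xs ! i#} = mset (map (\<lambda>j. xs ! skip i j) [0..<length xs - 1])"
proof -
  have "map (\<lambda>j. xs ! skip i j) [0..<length xs - 1] = take i xs @ drop (Suc i) xs"
    using assms by (intro nth_equalityI) (auto simp: nth_append skip_def)
  moreover have "mset xs = mset (take i xs @ xs ! i # drop (Suc i) xs)"
    using assms by (simp add: id_take_nth_drop[symmetric])
  ultimately show ?thesis by simp
qed

locale subfield =
  fixes F :: "'b::field set"
  assumes is_subfield: "is_subfield F"
begin

lemma zero_mem [simp, intro]: "0 \<in> F"
  and one_mem [simp, intro]: "1 \<in> F"
  and add_mem [intro]: "x \<in> F \<Longrightarrow> y \<in> F \<Longrightarrow> x + y \<in> F"
  and mult_mem [intro]: "x \<in> F \<Longrightarrow> y \<in> F \<Longrightarrow> x * y \<in> F"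
  and uminus_mem [intro]: "x \<in> F \<Longrightarrow> - x \<in> F"
  and inverse_mem [intro]: "x \<in> F \<Longrightarrow> inverse x \<in> F"
  using is_subfield by (simp_all add: is_subfield_def)

lemma diff_mem [intro]: "x \<in> F \<Longrightarrow> y \<in> F \<Longrightarrow> x - y \<in> F"
  by (metis add_mem uminus_mem diff_conv_add_uminus)

lemma divide_mem [intro]: "x \<in> F \<Longrightarrow> y \<in> F \<Longrightarrow> x / y \<in> F"
  by (simp add: divide_inverse mult_mem inverse_mem)

lemma sum_mem [intro]: "(\<And>x. x \<in> A \<Longrightarrow> f x \<in> F) \<Longrightarrow> sum f A \<in> F"
  by (induction A rule: infinite_finite_induct) auto

lemma dotp_Fvecs_mem: "c \<in> Fvecs F k \<Longrightarrow> v \<in> Fvecs F k \<Longrightarrow> dotp k c v \<in> F"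
  unfolding dotp_def Fvecs_def by (auto intro!: sum_mem mult_mem)

lemma unit_vec_Fvecs: "r < k \<Longrightarrow> unit_vec r \<in> Fvecs F k"
  by (auto simp: Fvecs_def unit_vec_def)

lemma mat_rows_Fvecs: "\<forall>r<k'. \<forall>s<k. P r s \<in> F \<Longrightarrow> r < k' \<Longrightarrow> mat_rows k P r \<in> Fvecs F k"
  by (simp add: mat_rows_def Fvecs_def)

lemma mat_cols_Fvecs: "\<forall>r<k'. \<forall>s<k. P r s \<in> F \<Longrightarrow> s < k \<Longrightarrow> mat_cols k' P s \<in> Fvecs F k'"
  by (simp add: mat_cols_def Fvecs_def)

lemma F_subspace_Fvecs: "F_subspace F (Fvecs F k)"
  by (auto simp: F_subspace_def Fvecs_def)

lemma F_subspace_annihilator: "F_subspace F (annihilator F k m u)"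
  using F_subspace_Fvecs
  by (auto simp: F_subspace_def annihilator_def dotp_def algebra_simps sum.distrib
      sum_distrib_left[symmetric])

lemma lincomb_mem:
  assumes "F_subspace F K" "\<forall>r<m. v r \<in> K" "\<forall>r<m. c r \<in> F"
  shows "lincomb m v c \<in> K"
  using assms(2,3)
proof (induction m)
  case 0
  then show ?case using assms(1) by (simp add: lincomb_def F_subspace_def)
next
  case (Suc m)
  have "lincomb (Suc m) v c = (\<lambda>j. lincomb m v c j + c m * v m j)"
    by (simp add: lincomb_def)
  then show ?case using Suc assms(1) by (simp add: F_subspace_def)
qed

lemma fcomb_subset: "F_subspace F K \<Longrightarrow> \<forall>r<m. v r \<in> K \<Longrightarrow> fcomb F m v \<subseteq> K"
  by (auto simp: fcomb_lincomb intro: lincomb_mem)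

lemma family_mem_fcomb: "r < m \<Longrightarrow> v r \<in> fcomb F m v"
proof -
  assume "r < m"
  then have "v r = lincomb m v (unit_vec r)"
    by (simp add: lincomb_def sum_unit_vec)
  then show ?thesis by (auto simp: fcomb_lincomb unit_vec_def)
qed

lemma fcomb_Suc_intro:
  assumes "x \<in> fcomb F m v" "a \<in> F"
  shows "(\<lambda>j. x j + a * v m j) \<in> fcomb F (Suc m) v"
proof -
  obtain c where c: "\<forall>r<m. c r \<in> F" "x = lincomb m v c"
    using assms(1) by (auto simp: fcomb_lincomb)
  have "(\<lambda>j. x j + a * v m j) = lincomb (Suc m) v (c(m := a))"
    using c(2) by (auto simp: lincomb_def intro!: sum.cong)
  moreover have "\<forall>r<Suc m. (c(m := a)) r \<in> F"
    using c(1) assms(2) by (simp add: less_Suc_eq)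
  ultimately show ?thesis by (auto simp: fcomb_lincomb)
qed

lemma dotp_fcomb_eq_0: "\<forall>l<m. dotp k c (u l) = 0 \<Longrightarrow> w \<in> fcomb F m u \<Longrightarrow> dotp k c w = 0"
  by (auto simp: fcomb_lincomb dotp_lincomb_right)

lemma inj_on_lincomb: "F_indep F m v \<Longrightarrow> inj_on (lincomb m v) (Fvecs F m)"
proof (rule inj_onI)
  fix x y assume indep: "F_indep F m v" and xy: "x \<in> Fvecs F m" "y \<in> Fvecs F m"
    and eq: "lincomb m v x = lincomb m v y"
  have "lincomb m v (\<lambda>r. x r - y r) = (\<lambda>j. 0)" using eq by (simp add: lincomb_diff)
  moreover have "\<forall>r<m. x r - y r \<in> F" using xy by (auto simp: Fvecs_def)
  moreover have "(\<forall>r<m. x r - y r \<in> F) \<longrightarrow> lincomb m v (\<lambda>r. x r - y r) = (\<lambda>j. 0)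
      \<longrightarrow> (\<forall>r<m. x r - y r = 0)"
    using indep unfolding F_indep_lincomb by (rule spec)
  ultimately have "\<forall>r<m. x r - y r = 0" by blast
  then have "\<forall>r<m. x r = y r" by simp
  show "x = y"
  proof
    fix r show "x r = y r"
      using xy \<open>\<forall>r<m. x r = y r\<close> by (cases "r < m") (auto simp: Fvecs_def)
  qed
qed

lemma F_basis_image_iff:
  assumes T: "\<And>d. T (lincomb m p d) = lincomb m (\<lambda>r. T (p r)) d"
    and inj: "inj_on T K" and K: "F_subspace F K" and p: "\<forall>r<m. p r \<in> K"
  shows "F_basis F m (\<lambda>r. T (p r)) (T ` K) \<longleftrightarrow> F_basis F m p K"
proof -
  have sub: "fcomb F m p \<subseteq> K" using fcomb_subset[OF K p] .
  have "fcomb F m (\<lambda>r. T (p r)) = T ` fcomb F m p"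
    by (simp add: fcomb_lincomb setcompr_eq_image image_image T)
  then have span: "fcomb F m (\<lambda>r. T (p r)) = T ` K \<longleftrightarrow> fcomb F m p = K"
    using inj sub by (simp add: inj_on_image_eq_iff)
  have "lincomb m (\<lambda>r. T (p r)) d = (\<lambda>j. 0) \<longleftrightarrow> lincomb m p d = (\<lambda>j. 0)"
    if "\<forall>r<m. d r \<in> F" for d
  proof -
    have "T (\<lambda>j. 0) = (\<lambda>j. 0)" using T[of "\<lambda>_. 0"] by simp
    moreover have "lincomb m p d \<in> K" using that sub by (auto simp: fcomb_lincomb)
    moreover have "(\<lambda>j. 0) \<in> K" using K by (simp add: F_subspace_def)
    ultimately show ?thesis using inj_on_eq_iff[OF inj] T[of d] by metis
  qed
  then have "F_indep F m (\<lambda>r. T (p r)) \<longleftrightarrow> F_indep F m p"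
    unfolding F_indep_lincomb by auto
  with span show ?thesis by (simp add: F_basis_def)
qed

lemma field_basis_coeffs_eq:
  assumes "is_field_basis F h \<alpha>" "\<forall>l<h. a l \<in> F" "\<forall>l<h. b l \<in> F"
    "(\<Sum>l<h. a l * \<alpha> l) = (\<Sum>l<h. b l * \<alpha> l)" "l < h"
  shows "a l = b l"
proof -
  have "(\<Sum>l<h. (a l - b l) * \<alpha> l) = 0"
    using assms(4) by (simp add: left_diff_distrib sum_subtractf)
  moreover have "\<forall>l<h. a l - b l \<in> F" using assms(2,3) by auto
  moreover have "(\<forall>l<h. a l - b l \<in> F) \<longrightarrow> (\<Sum>l<h. (a l - b l) * \<alpha> l) = 0
      \<longrightarrow> (\<forall>l<h. a l - b l = 0)"
    using conjunct1[OF assms(1)[unfolded is_field_basis_def]] by (rule spec)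
  ultimately have "\<forall>l<h. a l - b l = 0" by blast
  then show ?thesis using assms(5) by simp
qed

section \<open>The double annihilator theorem\<close>

lemma annihilator_Suc_combination:
  assumes c1: "c1 \<in> annihilator F k m u" "dotp k c1 (u m) \<noteq> 0"
    and c2: "c2 \<in> annihilator F k m u" and um: "u m \<in> Fvecs F k"
  defines "s \<equiv> dotp k c2 (u m) / dotp k c1 (u m)"
  shows "(\<lambda>j. c2 j - s * c1 j) \<in> annihilator F k (Suc m) u"
proof -
  have "c1 \<in> Fvecs F k" "c2 \<in> Fvecs F k" using c1(1) c2 by (simp_all add: annihilator_def)
  moreover from this have "s \<in> F" using um unfolding s_def by (intro divide_mem dotp_Fvecs_mem)
  ultimately have "(\<lambda>j. c2 j - s * c1 j) \<in> Fvecs F k"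
    by (auto simp: Fvecs_def intro!: diff_mem mult_mem)
  moreover have "dotp k (\<lambda>j. c2 j - s * c1 j) (u l) = 0" if "l < Suc m" for l
  proof -
    have "dotp k (\<lambda>j. c2 j - s * c1 j) (u l) = dotp k c2 (u l) - s * dotp k c1 (u l)"
      by (rule dotp_diff_left)
    then show ?thesis using that c1 c2 by (auto simp: s_def annihilator_def less_Suc_eq)
  qed
  ultimately show ?thesis by (simp add: annihilator_def)
qed

lemma exists_annihilator_separating:
  assumes "\<forall>l<m. u l \<in> Fvecs F k" "v \<in> Fvecs F k" "v \<notin> fcomb F m u"
  shows "\<exists>c\<in>annihilator F k m u. dotp k c v \<noteq> 0"
  using assms
proof (induction m arbitrary: v)
  case 0
  then obtain r where r: "v r \<noteq> 0" by (auto simp: fcomb_zero)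
  with 0(2) have "r < k" by (auto simp: Fvecs_def not_less[symmetric])
  with r show ?case
    by (intro bexI[of _ "unit_vec r"]) (auto simp: annihilator_def dotp_unit_vec unit_vec_Fvecs)
next
  case (Suc m)
  have u: "\<forall>l<m. u l \<in> Fvecs F k" and um: "u m \<in> Fvecs F k"
    using Suc.prems(1) by auto
  have "v \<notin> fcomb F m u"
    using Suc.prems(3) fcomb_Suc_intro[of v m u 0] by auto
  then obtain c1 where c1: "c1 \<in> annihilator F k m u" "dotp k c1 v \<noteq> 0"
    using Suc.IH[OF u Suc.prems(2)] by blast
  show ?case
  proof (cases "dotp k c1 (u m) = 0")
    case True
    then show ?thesis using c1 by (auto simp: annihilator_def less_Suc_eq)
  next
    case False
    (* Move v along u m into the hyperplane c1 = 0, separate it from u 0, ..., u (m - 1)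
       by c2, and correct c2 by a multiple of c1 so that it also kills u m. *)
    define t where "t = dotp k c1 v / dotp k c1 (u m)"
    define v' where "v' = (\<lambda>j. v j - t * u m j)"
    have "t \<in> F" using c1(1) Suc.prems(2) um by (auto simp: t_def annihilator_def intro: dotp_Fvecs_mem)
    then have "v' \<in> Fvecs F k"
      using Suc.prems(2) um by (auto simp: v'_def Fvecs_def intro!: diff_mem mult_mem)
    moreover have "v' \<notin> fcomb F m u"
      using fcomb_Suc_intro[of v' m u t] \<open>t \<in> F\<close> Suc.prems(3) by (auto simp: v'_def)
    ultimately obtain c2 where c2: "c2 \<in> annihilator F k m u" "dotp k c2 v' \<noteq> 0"
      using Suc.IH[OF u] by blast
    define s where "s = dotp k c2 (u m) / dotp k c1 (u m)"
    have "dotp k (\<lambda>j. c2 j - s * c1 j) v = dotp k c2 v - s * dotp k c1 v"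
      by (simp add: dotp_diff_left)
    also have "s * dotp k c1 v = t * dotp k c2 (u m)" by (simp add: s_def t_def)
    also have "dotp k c2 v - t * dotp k c2 (u m) = dotp k c2 v'"
      by (simp add: v'_def dotp_diff_right)
    finally have "dotp k (\<lambda>j. c2 j - s * c1 j) v \<noteq> 0" using c2(2) by simp
    moreover have "(\<lambda>j. c2 j - s * c1 j) \<in> annihilator F k (Suc m) u"
      unfolding s_def by (rule annihilator_Suc_combination[OF c1(1) False c2(1) um])
    ultimately show ?thesis by blast
  qed
qed

lemma mat_app_surj_iff_rows_indep:
  assumes PF: "\<forall>r<k'. \<forall>s<k. P r s \<in> F"
  shows "mat_app k' k P ` Fvecs F k = Fvecs F k' \<longleftrightarrow> F_indep F k' (mat_rows k P)"
proof
  assume surj: "mat_app k' k P ` Fvecs F k = Fvecs F k'"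
  show "F_indep F k' (mat_rows k P)"
    unfolding F_indep_lincomb
  proof (intro allI impI)
    fix d r assume zero: "lincomb k' (mat_rows k P) d = (\<lambda>j. 0)" and r: "r < k'"
    obtain v where "mat_app k' k P v = unit_vec r"
      using surj unit_vec_Fvecs[OF r] by (metis imageE)
    then have "d r = dotp k (lincomb k' (mat_rows k P) d) v"
      using r by (metis dotp_mat_app dotp_unit_vec_right)
    then show "d r = 0" using zero by (simp add: dotp_def)
  qed
next
  assume indep: "F_indep F k' (mat_rows k P)"
  have "Fvecs F k' \<subseteq> fcomb F k (mat_cols k' P)"
  proof (rule subsetI, rule ccontr)
    fix w assume "w \<in> Fvecs F k'" "w \<notin> fcomb F k (mat_cols k' P)"
    then obtain d where d: "d \<in> annihilator F k' k (mat_cols k' P)" "dotp k' d w \<noteq> 0"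
      using exists_annihilator_separating mat_cols_Fvecs[OF PF] by blast
    have "lincomb k' (mat_rows k P) d s = 0" for s
      using d(1) by (cases "s < k") (simp_all add: annihilator_def dotp_mat_cols lincomb_mat_rows_beyond)
    moreover have "\<forall>r<k'. d r \<in> F" using d(1) by (simp add: annihilator_def Fvecs_def)
    ultimately have "\<forall>r<k'. d r = 0"
      using indep unfolding F_indep_lincomb by blast
    then show False using d(2) by (simp add: dotp_def)
  qed
  moreover have "fcomb F k (mat_cols k' P) \<subseteq> Fvecs F k'"
    using mat_cols_Fvecs[OF PF] by (intro fcomb_subset F_subspace_Fvecs) auto
  ultimately show "mat_app k' k P ` Fvecs F k = Fvecs F k'"
    by (simp add: mat_app_image_Fvecs)
qed

lemma kernel_eq_iff_row_space_eq:
  assumes PF: "\<forall>r<k'. \<forall>s<k. P r s \<in> F" and u: "\<forall>l<h. u l \<in> Fvecs F k"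
  shows "{v \<in> Fvecs F k. mat_app k' k P v = (\<lambda>r. 0)} = fcomb F h u
    \<longleftrightarrow> fcomb F k' (mat_rows k P) = annihilator F k h u"
proof
  assume ker: "{v \<in> Fvecs F k. mat_app k' k P v = (\<lambda>r. 0)} = fcomb F h u"
  have rows: "\<forall>r<k'. mat_rows k P r \<in> annihilator F k h u"
    using ker family_mem_fcomb[of _ h u] mat_rows_Fvecs[OF PF]
    by (auto simp: annihilator_def mat_app_eq_0_iff)
  show "fcomb F k' (mat_rows k P) = annihilator F k h u"
  proof
    show "fcomb F k' (mat_rows k P) \<subseteq> annihilator F k h u"
      using rows by (rule fcomb_subset[OF F_subspace_annihilator])
    show "annihilator F k h u \<subseteq> fcomb F k' (mat_rows k P)"
    proof (rule subsetI, rule ccontr)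
      fix c assume c: "c \<in> annihilator F k h u" "c \<notin> fcomb F k' (mat_rows k P)"
      have "c \<in> Fvecs F k" using c(1) by (simp add: annihilator_def)
      then obtain w where w: "w \<in> annihilator F k k' (mat_rows k P)" "dotp k w c \<noteq> 0"
        using exists_annihilator_separating[OF _ _ c(2)] mat_rows_Fvecs[OF PF] by blast
      then have "w \<in> fcomb F h u"
        using ker by (auto simp: annihilator_def mat_app_eq_0_iff dotp_commute[of k _ w])
      then have "dotp k c w = 0" using c(1) by (auto simp: annihilator_def intro: dotp_fcomb_eq_0)
      then show False using w(2) by (simp add: dotp_commute)
    qed
  qed
next
  assume span: "fcomb F k' (mat_rows k P) = annihilator F k h u"
  have rows: "dotp k (mat_rows k P r) (u l) = 0" if "r < k'" "l < h" for r l
    using span family_mem_fcomb[OF that(1), of "mat_rows k P"] that(2) by (auto simp: annihilator_def)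
  show "{v \<in> Fvecs F k. mat_app k' k P v = (\<lambda>r. 0)} = fcomb F h u"
  proof
    show "fcomb F h u \<subseteq> {v \<in> Fvecs F k. mat_app k' k P v = (\<lambda>r. 0)}"
      using fcomb_subset[OF F_subspace_Fvecs u] rows dotp_fcomb_eq_0[of h k "mat_rows k P _" u]
      by (auto simp: mat_app_eq_0_iff)
    show "{v \<in> Fvecs F k. mat_app k' k P v = (\<lambda>r. 0)} \<subseteq> fcomb F h u"
    proof (rule subsetI, rule ccontr)
      fix v assume v: "v \<in> {v \<in> Fvecs F k. mat_app k' k P v = (\<lambda>r. 0)}" "v \<notin> fcomb F h u"
      then obtain c where c: "c \<in> annihilator F k h u" "dotp k c v \<noteq> 0"
        using exists_annihilator_separating u by blast
      have "dotp k v c = 0"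
        using v(1) c(1) span
        by (auto simp: mat_app_eq_0_iff dotp_commute[of k _ v] intro: dotp_fcomb_eq_0)
      then show False using c(2) by (simp add: dotp_commute)
    qed
  qed
qed

lemma quotient_map_iff_rows_basis:
  assumes "\<forall>l<h. u l \<in> Fvecs F k"
  shows "quotient_map F k k' (fcomb F h u) P \<longleftrightarrow> F_basis F k' (mat_rows k P) (annihilator F k h u)"
proof -
  have "\<forall>r<k'. \<forall>s<k. P r s \<in> F" if "F_basis F k' (mat_rows k P) (annihilator F k h u)"
    using that family_mem_fcomb[of _ k' "mat_rows k P"]
    by (force simp: F_basis_def annihilator_def Fvecs_def mat_rows_def)
  then show ?thesis
  proof (cases "\<forall>r<k'. \<forall>s<k. P r s \<in> F")
    case True
    then show ?thesis
      using mat_app_surj_iff_rows_indep[OF True] kernel_eq_iff_row_space_eq[OF True assms]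
      by (simp add: quotient_map_def F_basis_def)
  qed (auto simp: quotient_map_def)
qed

end

section \<open>Projective systems of a code and of its projection\<close>

locale assoc_setting = subfield F
  for F :: "'b::field set" +
  fixes h :: nat and \<alpha> :: "nat \<Rightarrow> 'b" and k n :: nat and G :: "nat \<Rightarrow> nat \<Rightarrow> 'b"
    and Gc :: "nat \<Rightarrow> nat \<Rightarrow> nat \<Rightarrow> 'b" and C :: "(nat \<Rightarrow> 'b) set"
    and As :: "(nat \<Rightarrow> 'b) set list" and i :: nat
  assumes field_basis: "is_field_basis F h \<alpha>"
    and Gc_mem: "\<forall>j<n. \<forall>r<k. \<forall>l<h. Gc j r l \<in> F"
    and G_eq: "\<forall>r<k. \<forall>j<n. G r j = (\<Sum>l<h. Gc j r l * \<alpha> l)"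
    and basis: "F_basis F k (\<lambda>r j. if j < n then G r j else 0) C"
    and As_eq: "As = map (\<lambda>j. fcomb F h (\<lambda>l r. if r < k then Gc j r l else 0)) [0..<n]"
    and i_less: "i < n"
begin

definition codeword :: "(nat \<Rightarrow> 'b) \<Rightarrow> nat \<Rightarrow> 'b" where
  "codeword = lincomb k (\<lambda>r j. if j < n then G r j else 0)"

definition col :: "nat \<Rightarrow> nat \<Rightarrow> nat \<Rightarrow> 'b" where
  "col j l = (\<lambda>r. if r < k then Gc j r l else 0)"

definition punctured :: "(nat \<Rightarrow> 'b) \<Rightarrow> nat \<Rightarrow> 'b" where
  "punctured c = (\<lambda>j. codeword c (skip i j))"

lemma length_As: "length As = n"
  by (simp add: As_eq)

lemma As_nth: "j < n \<Longrightarrow> As ! j = fcomb F h (col j)"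
  by (simp add: As_eq col_def[abs_def] cong: if_cong)

lemma col_Fvecs: "j < n \<Longrightarrow> l < h \<Longrightarrow> col j l \<in> Fvecs F k"
  using Gc_mem by (simp add: col_def Fvecs_def)

lemma codeword_nth: "j < n \<Longrightarrow> codeword c j = (\<Sum>l<h. dotp k c (col j l) * \<alpha> l)"
  using G_eq
  by (simp add: codeword_def lincomb_def dotp_def col_def sum_distrib_left sum_distrib_right
      mult.assoc sum.swap[of _ "{..<h}"])

lemma codeword_beyond: "n \<le> j \<Longrightarrow> codeword c j = 0"
  by (simp add: codeword_def lincomb_def)

lemma codeword_nth_eq_0_iff:
  assumes "c \<in> Fvecs F k" "j < n"
  shows "codeword c j = 0 \<longleftrightarrow> (\<forall>l<h. dotp k c (col j l) = 0)"
proof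
  assume "codeword c j = 0"
  then have "(\<Sum>l<h. dotp k c (col j l) * \<alpha> l) = (\<Sum>l<h. 0 * \<alpha> l)"
    using codeword_nth[OF assms(2)] by simp
  moreover have "\<forall>l<h. dotp k c (col j l) \<in> F"
    using assms col_Fvecs by (auto intro: dotp_Fvecs_mem)
  moreover have "\<forall>l<h. (0::'b) \<in> F" by simp
  ultimately show "\<forall>l<h. dotp k c (col j l) = 0"
    using field_basis_coeffs_eq[OF field_basis, of "\<lambda>l. dotp k c (col j l)" "\<lambda>_. 0"] by blast
qed (simp add: codeword_nth[OF assms(2)])

lemma C_eq: "C = codeword ` Fvecs F k"
  using basis by (simp add: F_basis_def fcomb_eq_image_Fvecs codeword_def)

lemma inj_on_codeword: "inj_on codeword (Fvecs F k)"
  using basis by (simp add: F_basis_def inj_on_lincomb codeword_def)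

lemma proj_code_eq: "proj_code i C = punctured ` annihilator F k h (col i)"
proof -
  have "c \<in> annihilator F k h (col i) \<longleftrightarrow> c \<in> Fvecs F k \<and> codeword c i = 0" for c
    using codeword_nth_eq_0_iff[OF _ i_less] by (auto simp: annihilator_def)
  then show ?thesis unfolding proj_code_skip C_eq punctured_def by blast
qed

lemma inj_on_punctured: "inj_on punctured (annihilator F k h (col i))"
proof (rule inj_onI)
  fix c c' assume c: "c \<in> annihilator F k h (col i)" "c' \<in> annihilator F k h (col i)"
    and eq: "punctured c = punctured c'"
  have "codeword c i = 0" "codeword c' i = 0"
    using c codeword_nth_eq_0_iff[OF _ i_less] by (simp_all add: annihilator_def)
  then have "codeword c = codeword c'"
    using eq by (intro eq_if_skip_eq[of _ i]) (simp_all add: punctured_def fun_eq_iff)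
  then show "c = c'" using c inj_on_codeword by (auto simp: annihilator_def inj_on_def)
qed

lemma punctured_lincomb: "punctured (lincomb m p d) = lincomb m (\<lambda>r. punctured (p r)) d"
  by (simp add: punctured_def codeword_def lincomb_lincomb) (simp add: lincomb_def)

lemma F_basis_punctured_iff:
  assumes "\<forall>r<m. p r \<in> annihilator F k h (col i)"
  shows "F_basis F m (\<lambda>r. punctured (p r)) (proj_code i C)
    \<longleftrightarrow> F_basis F m p (annihilator F k h (col i))"
  unfolding proj_code_eq
  using F_basis_image_iff[OF punctured_lincomb inj_on_punctured F_subspace_annihilator assms] .

lemma punctured_nth:
  "j < n - 1 \<Longrightarrow> punctured c j = (\<Sum>l<h. dotp k c (col (skip i j) l) * \<alpha> l)"
  by (simp add: punctured_def codeword_nth skip_less[OF i_less])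

lemma punctured_beyond: "n - 1 \<le> j \<Longrightarrow> punctured c j = 0"
  by (simp add: punctured_def codeword_beyond skip_ge[OF i_less])

lemma punctured_nth_coeffs:
  assumes "c \<in> Fvecs F k" "j < n - 1" "\<forall>l<h. a l \<in> F"
    and "punctured c j = (\<Sum>l<h. a l * \<alpha> l)" "l < h"
  shows "a l = dotp k c (col (skip i j) l)"
proof -
  have "\<forall>l<h. dotp k c (col (skip i j) l) \<in> F"
    using assms(1) col_Fvecs[OF skip_less[OF i_less assms(2)]] by (simp add: dotp_Fvecs_mem)
  then show ?thesis
    using field_basis_coeffs_eq[OF field_basis assms(3) _ _ assms(5)] assms(4)
    by (simp add: punctured_nth[OF assms(2)])
qed

lemma mat_app_image_As:
  "j < n \<Longrightarrow> mat_app k' k P ` (As ! j)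
    = fcomb F h (\<lambda>l r. if r < k' then dotp k (mat_rows k P r) (col j l) else 0)"
  by (simp add: As_nth mat_app_image_fcomb) (simp add: mat_app_eq_dotp_rows)

lemma proj_system_of_rows_basis:
  assumes P: "F_basis F k' (mat_rows k P) (annihilator F k h (col i))"
  shows "assoc_system F h \<alpha> k' (n - 1) (proj_code i C)
    (map (\<lambda>j. mat_app k' k P ` (As ! skip i j)) [0..<n - 1])"
proof -
  have rows: "\<forall>r<k'. mat_rows k P r \<in> annihilator F k h (col i)"
    using P family_mem_fcomb by (auto simp: F_basis_def)
  define G' where "G' r = punctured (mat_rows k P r)" for r
  define Gc' where "Gc' j r l = dotp k (mat_rows k P r) (col (skip i j) l)" for j r l
  have "\<forall>j<n - 1. \<forall>r<k'. \<forall>l<h. Gc' j r l \<in> F"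
    using rows col_Fvecs skip_less[OF i_less]
    by (auto simp: Gc'_def annihilator_def intro!: dotp_Fvecs_mem)
  moreover have "\<forall>r<k'. \<forall>j<n - 1. G' r j = (\<Sum>l<h. Gc' j r l * \<alpha> l)"
    by (simp add: G'_def Gc'_def punctured_nth)
  moreover have "(\<lambda>r j. if j < n - 1 then G' r j else 0) = G'"
    by (simp add: fun_eq_iff G'_def punctured_beyond)
  moreover have "F_basis F k' G' (proj_code i C)"
    using F_basis_punctured_iff[OF rows] P by (simp add: G'_def[abs_def])
  moreover have "map (\<lambda>j. mat_app k' k P ` (As ! skip i j)) [0..<n - 1]
      = map (\<lambda>j. fcomb F h (\<lambda>l r. if r < k' then Gc' j r l else 0)) [0..<n - 1]"
    by (rule map_cong[OF refl]) (simp add: mat_app_image_As skip_less[OF i_less] Gc'_def cong: if_cong)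
  ultimately show ?thesis
    unfolding assoc_system_def by (intro exI[of _ G'] exI[of _ Gc']) simp
qed

lemma rows_basis_of_proj_system:
  assumes "assoc_system F h \<alpha> k' (n - 1) (proj_code i C) Bs"
  obtains P where "F_basis F k' (mat_rows k P) (annihilator F k h (col i))"
    and "Bs = map (\<lambda>j. mat_app k' k P ` (As ! skip i j)) [0..<n - 1]"
proof -
  obtain G' Gc' where Gc'_mem: "\<forall>j<n - 1. \<forall>r<k'. \<forall>l<h. Gc' j r l \<in> F"
    and G'_eq: "\<forall>r<k'. \<forall>j<n - 1. G' r j = (\<Sum>l<h. Gc' j r l * \<alpha> l)"
    and basis': "F_basis F k' (\<lambda>r j. if j < n - 1 then G' r j else 0) (proj_code i C)"
    and Bs_eq: "Bs = map (\<lambda>j. fcomb F h (\<lambda>l r. if r < k' then Gc' j r l else 0)) [0..<n - 1]"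
    using assms unfolding assoc_system_def by blast
  define g where "g r = (\<lambda>j. if j < n - 1 then G' r j else 0)" for r
  have "g r \<in> punctured ` annihilator F k h (col i)" if "r < k'" for r
    using basis' family_mem_fcomb[OF that, of g] by (simp add: F_basis_def g_def[abs_def] proj_code_eq)
  then have "\<forall>r. \<exists>p. r < k' \<longrightarrow> p \<in> annihilator F k h (col i) \<and> g r = punctured p"
    by blast
  then obtain P where P: "\<And>r. r < k' \<Longrightarrow> P r \<in> annihilator F k h (col i)"
    "\<And>r. r < k' \<Longrightarrow> g r = punctured (P r)"
    by metis
  have rows: "mat_rows k P r = P r" if "r < k'" for r
    using P(1)[OF that] by (auto simp: fun_eq_iff mat_rows_def annihilator_def Fvecs_def)
  have "F_basis F k' (\<lambda>r. punctured (P r)) (proj_code i C)"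
    using basis' P(2) F_basis_cong[of k' g] by (simp add: g_def[abs_def])
  then have "F_basis F k' (mat_rows k P) (annihilator F k h (col i))"
    using F_basis_punctured_iff[of k' P] P(1) F_basis_cong[of k' "mat_rows k P" P] rows by simp
  moreover have "Bs = map (\<lambda>j. mat_app k' k P ` (As ! skip i j)) [0..<n - 1]"
    unfolding Bs_eq
  proof (rule map_cong[OF refl])
    fix j assume "j \<in> set [0..<n - 1]"
    then have j: "j < n - 1" by simp
    have "Gc' j r l = dotp k (mat_rows k P r) (col (skip i j) l)" if "r < k'" "l < h" for r l
    proof -
      have "punctured (P r) j = (\<Sum>l<h. Gc' j r l * \<alpha> l)"
        using fun_cong[OF P(2)[OF that(1)], of j] G'_eq j that(1) by (simp add: g_def)
      moreover have "P r \<in> Fvecs F k" using P(1)[OF that(1)] by (simp add: annihilator_def)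
      ultimately show ?thesis
        using punctured_nth_coeffs[OF _ j _ _ that(2)] Gc'_mem j that(1) rows[OF that(1)] by simp
    qed
    then show "fcomb F h (\<lambda>l r. if r < k' then Gc' j r l else 0) = mat_app k' k P ` (As ! skip i j)"
      unfolding mat_app_image_As[OF skip_less[OF i_less j]]
      by (intro fcomb_cong) (simp add: fun_eq_iff)
  qed
  ultimately show ?thesis by (rule that)
qed

lemma assoc_system_proj_code_iff:
  "assoc_system F h \<alpha> k' (n - 1) (proj_code i C) Bs \<longleftrightarrow>
    (\<exists>P. F_basis F k' (mat_rows k P) (annihilator F k h (col i)) \<and>
      Bs = map (\<lambda>j. mat_app k' k P ` (As ! skip i j)) [0..<n - 1])"
  using proj_system_of_rows_basis rows_basis_of_proj_system by blast

lemma image_mset_remove_As: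
  "image_mset f (mset As - {#As ! i#}) = mset (map (\<lambda>j. f (As ! skip i j)) [0..<n - 1])"
  using mset_remove_nth[of i As] i_less
  by (simp add: length_As multiset.map_comp comp_def del: mset_upt)

end

theorem lemma3p10:
  fixes F :: "'b::field set" and \<alpha> :: "nat \<Rightarrow> 'b"
    and h n k k' i :: nat and C :: "(nat \<Rightarrow> 'b) set"
    and As :: "(nat \<Rightarrow> 'b) set list"
  assumes "finite (UNIV :: 'b set)"
    and "is_subfield F"
    and "is_field_basis F h \<alpha>"
    and "Flinear_code F n k C"
    and "assoc_system F h \<alpha> k n C As"
    and "i < n"
    and "card (proj_code i C) = card F ^ k'"
  shows "{mset Bs | Bs. assoc_system F h \<alpha> k' (n - 1) (proj_code i C) Bs}
       = {image_mset (\<lambda>W. mat_app k' k P ` W) (mset As - {# As ! i #}) | P.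
            quotient_map F k k' (As ! i) P}"
proof -
  obtain G Gc where "\<forall>j<n. \<forall>r<k. \<forall>l<h. Gc j r l \<in> F"
    "\<forall>r<k. \<forall>j<n. G r j = (\<Sum>l<h. Gc j r l * \<alpha> l)"
    "F_basis F k (\<lambda>r j. if j < n then G r j else 0) C"
    "As = map (\<lambda>j. fcomb F h (\<lambda>l r. if r < k then Gc j r l else 0)) [0..<n]"
    using assms(5) unfolding assoc_system_def by blast
  then interpret assoc_setting F h \<alpha> k n G Gc C As i
    using assms(2,3,6) by unfold_locales
  have quotient_map_iff: "quotient_map F k k' (As ! i) P
      \<longleftrightarrow> F_basis F k' (mat_rows k P) (annihilator F k h (col i))" for P
    using quotient_map_iff_rows_basis col_Fvecs[OF i_less] by (simp add: As_nth[OF i_less])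
  have "{mset Bs | Bs. assoc_system F h \<alpha> k' (n - 1) (proj_code i C) Bs}
      = {mset (map (\<lambda>j. mat_app k' k P ` (As ! skip i j)) [0..<n - 1]) | P.
          F_basis F k' (mat_rows k P) (annihilator F k h (col i))}"
    unfolding assoc_system_proj_code_iff by blast
  also have "\<dots> = {image_mset (\<lambda>W. mat_app k' k P ` W) (mset As - {# As ! i #}) | P.
      quotient_map F k k' (As ! i) P}"
    unfolding image_mset_remove_As quotient_map_iff ..
  finally show ?thesis .
qed

end
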